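(* Let $p$ be a prime, let $G$ be a finite abelian $p$-group, and let $\boldsymbol{\alpha}=(\alpha_1,\ldots,\alpha_r)$ be a basis for $G$. Let $j$ and $k$ be nonnegative integers with $j<k$. Then $\boldsymbol{\alpha}(j,k)$ is a basis for $G(j,k)$.
   Context: A vector $\boldsymbol{\gamma}=(\gamma_1,\ldots,\gamma_s)$ of elements of a finite abelian group (trivial entries allowed) is a basis for the group $\langle\boldsymbol{\gamma}\rangle$ it generates if every $\beta\in\langle\boldsymbol{\gamma}\rangle$ can be written uniquely as $\gamma_1^{x_1}\cdots\gamma_s^{x_s}$ with $0\le x_i<|\gamma_i|$. For nonnegative integers $j<k$, $G(j,k)=\{\beta^{p^j}:\beta\in G,\ \beta^{p^k}=1_G\}$. With $n_i=\log_p|\alpha_i|$ and $q_i=p^{\,j+\max(0,n_i-k)}$, set $\mathbf{q}(j,k)=(q_1,\ldots,q_r)$ and $\boldsymbol{\alpha}(j,k)=(\alpha_1^{q_1},\ldots,\alpha_r^{q_r})$. *)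

theory Defs
  imports "HOL-Algebra.Algebra"
begin

fun pow_prod :: "('a, 'b) monoid_scheme \<Rightarrow> 'a list \<Rightarrow> nat list \<Rightarrow> 'a" where
  "pow_prod G (g # gs) (x # xs) = (g [^]\<^bsub>G\<^esub> x) \<otimes>\<^bsub>G\<^esub> pow_prod G gs xs"
| "pow_prod G _ _ = \<one>\<^bsub>G\<^esub>"

definition is_basis :: "('a, 'b) monoid_scheme \<Rightarrow> 'a list \<Rightarrow> bool" where
  "is_basis G gs \<longleftrightarrow> set gs \<subseteq> carrier G \<and>
     (\<forall>\<beta> \<in> generate G (set gs). \<exists>!xs. length xs = length gs \<and>
        (\<forall>i < length gs. xs ! i < group.ord G (gs ! i)) \<and> \<beta> = pow_prod G gs xs)"

definition Gjk :: "('a, 'b) monoid_scheme \<Rightarrow> nat \<Rightarrow> nat \<Rightarrow> nat \<Rightarrow> 'a set" where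
  "Gjk G p j k = {\<beta> [^]\<^bsub>G\<^esub> (p ^ j) | \<beta>. \<beta> \<in> carrier G \<and> \<beta> [^]\<^bsub>G\<^esub> (p ^ k) = \<one>\<^bsub>G\<^esub>}"

definition logp_ord :: "('a, 'b) monoid_scheme \<Rightarrow> nat \<Rightarrow> 'a \<Rightarrow> nat" where
  "logp_ord G p a = (THE n. group.ord G a = p ^ n)"

text \<open>q_i = p^(j + max(0, n_i - k)) (nat subtraction truncates at 0).\<close>
definition q_exp :: "('a, 'b) monoid_scheme \<Rightarrow> nat \<Rightarrow> nat \<Rightarrow> nat \<Rightarrow> 'a \<Rightarrow> nat" where
  "q_exp G p j k a = p ^ (j + (logp_ord G p a - k))"

definition alpha_jk :: "('a, 'b) monoid_scheme \<Rightarrow> nat \<Rightarrow> nat \<Rightarrow> nat \<Rightarrow> 'a list \<Rightarrow> 'a list" where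
  "alpha_jk G p j k as = map (\<lambda>a. a [^]\<^bsub>G\<^esub> q_exp G p j k a) as"

end

theory Submission
  imports Defs
begin

text \<open>Raising \<open>\<alpha>_i\<close> to the p-power \<open>q_i\<close> divides its order by \<open>q_i\<close> (or kills it), so
  \<open>x \<mapsto> x * q_i\<close> maps the reduced exponents of \<open>\<alpha>_i^q_i\<close> into those of \<open>\<alpha>_i\<close>,
  and uniqueness transfers from \<open>\<alpha>\<close> to \<open>\<alpha>(j,k)\<close>.
  Each \<open>\<alpha>_i^q_i = (\<alpha>_i^(p^m_i))^(p^j)\<close>, where \<open>m_i = max 0 (n_i - k)\<close>, lies in the
  subgroup \<open>G(j,k)\<close>. Conversely, if \<open>\<gamma> = \<Prod> \<alpha>_i^x_i\<close> satisfies \<open>\<gamma>^(p^k) = 1\<close>,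
  independence of \<open>\<alpha>\<close> gives \<open>p^n_i dvd x_i * p^k\<close>, i.e. \<open>p^m_i dvd x_i\<close>, so
  \<open>\<gamma>^(p^j)\<close> is a product of powers of the \<open>\<alpha>_i^q_i\<close>.\<close>

lemma power_diff_dvd_of_power_dvd_mult:
  fixes p n k x :: nat
  assumes "0 < p" "p ^ n dvd x * p ^ k"
  shows "p ^ (n - k) dvd x"
proof (cases "n \<le> k")
  case False
  then have "p ^ n = p ^ (n - k) * p ^ k"
    by (simp flip: power_add)
  then show ?thesis
    using assms by simp
qed simp

context group
begin

lemma pow_mod_ord:
  assumes a: "a \<in> carrier G"
  shows "a [^] (n mod ord a) = a [^] (n::nat)"
proof -
  have "a [^] n = a [^] (ord a * (n div ord a)) \<otimes> a [^] (n mod ord a)"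
    using a by (simp add: nat_pow_mult)
  also have "\<dots> = a [^] (n mod ord a)"
    using a by (simp add: nat_pow_pow[symmetric])
  finally show ?thesis by simp
qed

lemma ord_pos:
  assumes "finite (carrier G)" "a \<in> carrier G"
  shows "0 < ord a"
  using ord_ge_1[OF assms] by simp

lemma inv_eq_pow_order:
  assumes "finite (carrier G)" "a \<in> carrier G"
  shows "inv a = a [^] (order G - 1)"
proof (rule inv_equality)
  have "order G \<noteq> 0"
    using assms order_gt_0_iff_finite by blast
  have "a [^] (order G - 1) \<otimes> a = a [^] Suc (order G - 1)"
    by simp
  also have "\<dots> = \<one>"
    using \<open>order G \<noteq> 0\<close> pow_order_eq_1[OF assms(2)] by simp
  finally show "a [^] (order G - 1) \<otimes> a = \<one>" .
qed (use assms in auto)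

lemma ord_eq_power_logp_ord:
  assumes p: "Factorial_Ring.prime p" and order: "order G = p ^ m" and a: "a \<in> carrier G"
  shows "ord a = p ^ logp_ord G p a"
proof -
  obtain i where i: "ord a = p ^ i"
    using ord_dvd_group_order[OF a] order divides_primepow_nat[OF p] by auto
  moreover have "logp_ord G p a = i"
    unfolding logp_ord_def
    using i prime_gt_1_nat[OF p] by (intro the_equality) auto
  ultimately show ?thesis
    by simp
qed

lemma mult_prime_power_less_ord:
  assumes a: "a \<in> carrier G" and ord_a: "ord a = p ^ n" and p: "1 < p"
    and x: "x < ord (a [^] p ^ e)"
  shows "x * p ^ e < ord a"
proof (cases "e \<le> n")
  case True
  then have "p ^ e dvd ord a"
    using ord_a by (simp add: le_imp_power_dvd)
  then have "ord (a [^] p ^ e) = p ^ (n - e)"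
    using ord_pow[OF a] ord_a p True by (simp add: power_diff)
  then have "x * p ^ e < p ^ (n - e) * p ^ e"
    using x p by simp
  then show ?thesis
    using True ord_a by (simp flip: power_add)
next
  case False
  then have "ord a dvd p ^ e"
    using ord_a by (simp add: le_imp_power_dvd)
  then have "a [^] p ^ e = \<one>"
    using pow_eq_id[OF a] by simp
  then show ?thesis
    using x ord_a p by simp
qed

end

context monoid
begin

lemma pow_prod_closed: "set gs \<subseteq> carrier G \<Longrightarrow> pow_prod G gs xs \<in> carrier G"
proof (induction gs arbitrary: xs)
  case (Cons g gs)
  then show ?case by (cases xs) auto
qed auto

lemma pow_prod_replicate_zero: "pow_prod G gs (replicate m 0) = \<one>"
proof (induction gs arbitrary: m)
  case (Cons g gs)
  then show ?case by (cases m) auto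
qed auto

lemma pow_prod_unit_vector:
  "set gs \<subseteq> carrier G \<Longrightarrow> i < length gs \<Longrightarrow>
   pow_prod G gs (replicate i 0 @ 1 # replicate m 0) = gs ! i"
proof (induction gs arbitrary: i)
  case (Cons g gs)
  then show ?case by (cases i) (auto simp: pow_prod_replicate_zero subset_iff)
qed auto

lemma pow_prod_map_pow:
  "set gs \<subseteq> carrier G \<Longrightarrow>
   pow_prod G (map (\<lambda>a. a [^] q a) gs) xs = pow_prod G gs (map2 (\<lambda>x a. x * q a) xs gs)"
proof (induction gs arbitrary: xs)
  case (Cons g gs)
  then show ?case by (cases xs) (auto simp: nat_pow_pow mult.commute)
qed auto

end

context comm_monoid
begin

lemma pow_prod_pow:
  "set gs \<subseteq> carrier G \<Longrightarrow> pow_prod G gs xs [^] (m::nat) = pow_prod G gs (map (\<lambda>x. x * m) xs)"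
proof (induction gs arbitrary: xs)
  case (Cons g gs)
  then show ?case
    by (cases xs) (auto simp: nat_pow_distrib nat_pow_pow pow_prod_closed)
qed simp

lemma pow_prod_mult:
  "set gs \<subseteq> carrier G \<Longrightarrow> length xs = length gs \<Longrightarrow> length ys = length gs \<Longrightarrow>
   pow_prod G gs xs \<otimes> pow_prod G gs ys = pow_prod G gs (map2 (+) xs ys)"
proof (induction gs arbitrary: xs ys)
  case (Cons g gs)
  then obtain x xs' y ys' where "xs = x # xs'" "ys = y # ys'"
    by (metis length_Suc_conv)
  moreover have gs: "set gs \<subseteq> carrier G" and "g \<in> carrier G"
    using Cons.prems by auto
  ultimately have "pow_prod G (g # gs) xs \<otimes> pow_prod G (g # gs) ys
      = (g [^] x \<otimes> g [^] y) \<otimes> (pow_prod G gs xs' \<otimes> pow_prod G gs ys')"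
    by (simp add: m_ac pow_prod_closed)
  then show ?case
    using Cons.IH[OF gs] Cons.prems \<open>xs = x # xs'\<close> \<open>ys = y # ys'\<close> \<open>g \<in> carrier G\<close>
    by (simp add: nat_pow_mult)
qed simp

end

context group
begin

lemma pow_prod_mod_ord:
  "set gs \<subseteq> carrier G \<Longrightarrow> pow_prod G gs (map2 (\<lambda>x a. x mod ord a) xs gs) = pow_prod G gs xs"
proof (induction gs arbitrary: xs)
  case (Cons g gs)
  then show ?case
    by (cases xs) (auto simp: pow_mod_ord)
qed auto

lemma pow_prod_in_generate:
  "set gs \<subseteq> carrier G \<Longrightarrow> pow_prod G gs xs \<in> generate G (set gs)"
proof (induction gs arbitrary: xs)
  case (Cons g gs)
  have sub: "subgroup (generate G (set (g # gs))) G"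
    using Cons.prems by (intro generate_is_subgroup) auto
  show ?case
  proof (cases xs)
    case (Cons x xs')
    have "g [^] x \<in> generate G (set (g # gs))"
      using subgroup_int_pow_closed[OF sub, of g "int x"] generate.incl[of g "set (g # gs)" G]
      by (simp add: int_pow_int)
    moreover have "pow_prod G gs xs' \<in> generate G (set (g # gs))"
      using Cons.IH[of xs'] Cons.prems mono_generate[of "set gs" "set (g # gs)"] by auto
    ultimately show ?thesis
      using Cons subgroup.m_closed[OF sub] by simp
  qed (auto intro: generate.one)
qed (auto intro: generate.one)

lemma is_basis_carrier: "is_basis G gs \<Longrightarrow> set gs \<subseteq> carrier G"
  by (simp add: is_basis_def)

lemma is_basis_pow_prod_inj:
  assumes "is_basis G gs"
    and "length xs = length gs" "\<forall>i < length gs. xs ! i < ord (gs ! i)"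
    and "length ys = length gs" "\<forall>i < length gs. ys ! i < ord (gs ! i)"
    and "pow_prod G gs xs = pow_prod G gs ys"
  shows "xs = ys"
proof -
  have "\<forall>b \<in> generate G (set gs). \<exists>!zs. length zs = length gs \<and>
      (\<forall>i < length gs. zs ! i < ord (gs ! i)) \<and> b = pow_prod G gs zs"
    using assms(1) by (simp add: is_basis_def)
  moreover have "pow_prod G gs xs \<in> generate G (set gs)"
    using assms(1) is_basis_carrier pow_prod_in_generate by blast
  ultimately have "\<exists>!zs. length zs = length gs \<and> (\<forall>i < length gs. zs ! i < ord (gs ! i)) \<and>
      pow_prod G gs xs = pow_prod G gs zs"
    by (rule bspec)
  then show ?thesis
    using assms(2-6) by (elim ex1E) (metis (no_types, lifting))
qed

lemma is_basis_pow_prod_eq_one: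
  assumes fin: "finite (carrier G)" and basis: "is_basis G gs"
    and xs: "length xs = length gs" "pow_prod G gs xs = \<one>" and i: "i < length gs"
  shows "gs ! i [^] (xs ! i) = \<one>"
proof -
  have gs: "set gs \<subseteq> carrier G"
    using basis by (rule is_basis_carrier)
  have ord_pos: "\<forall>i < length gs. 0 < ord (gs ! i)"
    using gs by (meson nth_mem ord_pos[OF fin] subsetD)
  have "pow_prod G gs (map2 (\<lambda>x a. x mod ord a) xs gs) = pow_prod G gs (replicate (length gs) 0)"
    using pow_prod_mod_ord[OF gs] xs pow_prod_replicate_zero by simp
  then have "map2 (\<lambda>x a. x mod ord a) xs gs = replicate (length gs) 0"
    using ord_pos xs(1) by (intro is_basis_pow_prod_inj[OF basis]) auto
  then have "map2 (\<lambda>x a. x mod ord a) xs gs ! i = 0"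
    using i by simp
  then have "ord (gs ! i) dvd xs ! i"
    using i xs(1) by (simp add: mod_eq_0_iff_dvd)
  then show ?thesis
    using pow_eq_id gs i nth_mem by blast
qed

end

context comm_group
begin

lemma generate_eq_pow_prods:
  assumes fin: "finite (carrier G)" and gs: "set gs \<subseteq> carrier G"
  shows "generate G (set gs) = {pow_prod G gs xs | xs. length xs = length gs}"
    (is "_ = ?S")
proof
  show "?S \<subseteq> generate G (set gs)"
    using pow_prod_in_generate[OF gs] by blast
  show "generate G (set gs) \<subseteq> ?S"
  proof (rule generate_subgroup_incl)
    show "set gs \<subseteq> ?S"
    proof
      fix g assume "g \<in> set gs"
      then obtain i where i: "i < length gs" "g = gs ! i"
        by (metis in_set_conv_nth)
      then show "g \<in> ?S"
        using pow_prod_unit_vector[OF gs i(1), of "length gs - Suc i"]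
        by (intro CollectI exI[of _ "replicate i 0 @ 1 # replicate (length gs - Suc i) 0"]) auto
    qed
    show "subgroup ?S G"
    proof (rule subgroupI)
      show "?S \<subseteq> carrier G"
        using pow_prod_closed[OF gs] by blast
      show "?S \<noteq> {}"
        by (metis (mono_tags, lifting) empty_iff length_replicate mem_Collect_eq)
    next
      fix a assume "a \<in> ?S"
      then obtain xs where "a = pow_prod G gs xs" "length xs = length gs" by blast
      then show "inv a \<in> ?S"
        using inv_eq_pow_order[OF fin] pow_prod_closed[OF gs] pow_prod_pow[OF gs] by auto
    next
      fix a b assume "a \<in> ?S" "b \<in> ?S"
      then obtain xs ys where "a = pow_prod G gs xs" "length xs = length gs"
        "b = pow_prod G gs ys" "length ys = length gs" by blast
      then show "a \<otimes> b \<in> ?S"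
        using pow_prod_mult[OF gs] by (intro CollectI exI[of _ "map2 (+) xs ys"]) auto
    qed
  qed
qed

lemma exists_reduced_pow_prod:
  assumes fin: "finite (carrier G)" and gs: "set gs \<subseteq> carrier G"
    and b: "b \<in> generate G (set gs)"
  shows "\<exists>xs. length xs = length gs \<and> (\<forall>i < length gs. xs ! i < ord (gs ! i)) \<and> b = pow_prod G gs xs"
proof -
  obtain xs where xs: "b = pow_prod G gs xs" "length xs = length gs"
    using b generate_eq_pow_prods[OF fin gs] by blast
  have "\<forall>i < length gs. 0 < ord (gs ! i)"
    using gs by (meson nth_mem ord_pos[OF fin] subsetD)
  then show ?thesis
    using xs pow_prod_mod_ord[OF gs, of xs]
    by (intro exI[of _ "map2 (\<lambda>x a. x mod ord a) xs gs"]) auto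
qed

lemma is_basisI:
  assumes fin: "finite (carrier G)" and gs: "set gs \<subseteq> carrier G"
    and inj: "\<And>xs ys. length xs = length gs \<Longrightarrow> \<forall>i < length gs. xs ! i < ord (gs ! i) \<Longrightarrow>
      length ys = length gs \<Longrightarrow> \<forall>i < length gs. ys ! i < ord (gs ! i) \<Longrightarrow>
      pow_prod G gs xs = pow_prod G gs ys \<Longrightarrow> xs = ys"
  shows "is_basis G gs"
  unfolding is_basis_def
proof (intro conjI ballI gs)
  fix b assume "b \<in> generate G (set gs)"
  then show "\<exists>!xs. length xs = length gs \<and> (\<forall>i < length gs. xs ! i < ord (gs ! i)) \<and>
      b = pow_prod G gs xs"
  proof -
    obtain xs where xs: "length xs = length gs" "\<forall>i < length gs. xs ! i < ord (gs ! i)"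
      "b = pow_prod G gs xs"
      using exists_reduced_pow_prod[OF fin gs \<open>b \<in> generate G (set gs)\<close>] by blast
    show ?thesis
    proof (rule ex1I[of _ xs])
      fix ys
      assume ys: "length ys = length gs \<and> (\<forall>i < length gs. ys ! i < ord (gs ! i)) \<and>
        b = pow_prod G gs ys"
      show "ys = xs"
        by (rule inj) (use xs ys in simp_all)
    qed (use xs in auto)
  qed
qed

lemma is_basis_map_pow:
  assumes fin: "finite (carrier G)" and basis: "is_basis G gs"
    and q_pos: "\<And>a. a \<in> set gs \<Longrightarrow> 0 < q a"
    and q_range: "\<And>a x. a \<in> set gs \<Longrightarrow> x < ord (a [^] q a) \<Longrightarrow> x * q a < ord a"
  shows "is_basis G (map (\<lambda>a. a [^] q a) gs)"
proof -
  have gs: "set gs \<subseteq> carrier G"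
    using basis by (rule is_basis_carrier)
  let ?hs = "map (\<lambda>a. a [^] q a) gs"
  let ?scale = "\<lambda>xs. map2 (\<lambda>x a. x * q a) xs gs"
  show ?thesis
  proof (rule is_basisI[OF fin])
    show "set ?hs \<subseteq> carrier G"
      using gs by auto
  next
    fix xs ys
    assume xs: "length xs = length ?hs" "\<forall>i < length ?hs. xs ! i < ord (?hs ! i)"
      and ys: "length ys = length ?hs" "\<forall>i < length ?hs. ys ! i < ord (?hs ! i)"
      and eq: "pow_prod G ?hs xs = pow_prod G ?hs ys"
    have "?scale xs = ?scale ys"
    proof (rule is_basis_pow_prod_inj[OF basis])
      show "\<forall>i < length gs. ?scale xs ! i < ord (gs ! i)" "\<forall>i < length gs. ?scale ys ! i < ord (gs ! i)"
        using xs ys q_range nth_mem by auto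
      show "pow_prod G gs (?scale xs) = pow_prod G gs (?scale ys)"
        using eq pow_prod_map_pow[OF gs] by simp
    qed (use xs ys in auto)
    then have scaled: "?scale xs ! i = ?scale ys ! i" for i
      by simp
    have "xs ! i = ys ! i" if "i < length gs" for i
      using that xs(1) ys(1) scaled[of i] q_pos[OF nth_mem[OF that]] by simp
    then show "xs = ys"
      using xs(1) ys(1) by (intro nth_equalityI) auto
  qed
qed

lemma subgroup_Gjk: "subgroup (Gjk G p j k) G"
proof (rule subgroupI)
  show "Gjk G p j k \<subseteq> carrier G"
    by (auto simp: Gjk_def)
  have "\<one> = \<one> [^] p ^ j \<and> \<one> [^] p ^ k = \<one>"
    by simp
  then show "Gjk G p j k \<noteq> {}"
    unfolding Gjk_def by blast
next
  fix a assume "a \<in> Gjk G p j k"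
  then obtain b where "a = b [^] p ^ j" "b \<in> carrier G" "b [^] p ^ k = \<one>"
    by (auto simp: Gjk_def)
  then have "inv a = inv b [^] p ^ j \<and> inv b \<in> carrier G \<and> inv b [^] p ^ k = \<one>"
    by (simp add: nat_pow_inv)
  then show "inv a \<in> Gjk G p j k"
    unfolding Gjk_def by blast
next
  fix a b assume "a \<in> Gjk G p j k" "b \<in> Gjk G p j k"
  then obtain c d where "a = c [^] p ^ j" "c \<in> carrier G" "c [^] p ^ k = \<one>"
    and "b = d [^] p ^ j" "d \<in> carrier G" "d [^] p ^ k = \<one>"
    by (auto simp: Gjk_def)
  then have "a \<otimes> b = (c \<otimes> d) [^] p ^ j \<and> c \<otimes> d \<in> carrier G \<and> (c \<otimes> d) [^] p ^ k = \<one>"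
    by (simp add: nat_pow_distrib)
  then show "a \<otimes> b \<in> Gjk G p j k"
    unfolding Gjk_def by blast
qed

lemma pow_q_exp_in_Gjk:
  assumes a: "a \<in> carrier G" and ord_a: "ord a = p ^ logp_ord G p a"
  shows "a [^] q_exp G p j k a \<in> Gjk G p j k"
proof -
  define n where "n = logp_ord G p a"
  define b where "b = a [^] p ^ (n - k)"
  have "a [^] q_exp G p j k a = b [^] p ^ j"
    by (simp add: b_def n_def q_exp_def a nat_pow_pow power_add mult.commute)
  moreover have "ord a dvd p ^ (n - k) * p ^ k"
    using ord_a by (simp add: n_def le_imp_power_dvd flip: power_add)
  then have "b [^] p ^ k = \<one>"
    using a pow_eq_id by (simp add: b_def nat_pow_pow)
  ultimately show ?thesis
    using a unfolding Gjk_def b_def by blast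
qed

lemma is_basis_alpha_jk:
  assumes p: "Factorial_Ring.prime p" and fin: "finite (carrier G)" and order: "order G = p ^ m"
    and basis: "is_basis G as"
  shows "is_basis G (alpha_jk G p j k as)"
  unfolding alpha_jk_def
proof (rule is_basis_map_pow[OF fin basis])
  fix a assume "a \<in> set as"
  then have a: "a \<in> carrier G"
    using is_basis_carrier[OF basis] by blast
  show "0 < q_exp G p j k a"
    using prime_gt_0_nat[OF p] by (simp add: q_exp_def)
  fix x assume "x < ord (a [^] q_exp G p j k a)"
  then show "x * q_exp G p j k a < ord a"
    unfolding q_exp_def
    using mult_prime_power_less_ord[OF a ord_eq_power_logp_ord[OF p order a] prime_gt_1_nat[OF p]]
    by blast
qed

lemma Gjk_subset_generate_alpha_jk:
  assumes p: "Factorial_Ring.prime p" and fin: "finite (carrier G)" and order: "order G = p ^ m"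
    and basis: "is_basis G as" and spans: "generate G (set as) = carrier G"
  shows "Gjk G p j k \<subseteq> generate G (set (alpha_jk G p j k as))"
proof
  fix x assume "x \<in> Gjk G p j k"
  then obtain \<gamma> where x: "x = \<gamma> [^] p ^ j" and \<gamma>: "\<gamma> \<in> carrier G" "\<gamma> [^] p ^ k = \<one>"
    by (auto simp: Gjk_def)
  have as: "set as \<subseteq> carrier G"
    using basis by (rule is_basis_carrier)
  obtain xs where xs: "\<gamma> = pow_prod G as xs" "length xs = length as"
    using \<gamma>(1) spans generate_eq_pow_prods[OF fin as] by auto
  let ?n = "\<lambda>a. logp_ord G p a"
  have dvd: "p ^ (?n (as ! i) - k) dvd xs ! i" if i: "i < length as" for i
  proof -
    have "pow_prod G as (map (\<lambda>x. x * p ^ k) xs) = \<one>"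
      using \<gamma>(2) xs pow_prod_pow[OF as] by simp
    then have "as ! i [^] (xs ! i * p ^ k) = \<one>"
      using is_basis_pow_prod_eq_one[OF fin basis _ _ i, of "map (\<lambda>x. x * p ^ k) xs"] xs(2) i
      by simp
    then have "p ^ ?n (as ! i) dvd xs ! i * p ^ k"
      using pow_eq_id ord_eq_power_logp_ord[OF p order] as i nth_mem by (metis subsetD)
    then show ?thesis
      by (rule power_diff_dvd_of_power_dvd_mult[OF prime_gt_0_nat[OF p]])
  qed
  define ys where "ys = map2 (\<lambda>x a. x div p ^ (?n a - k)) xs as"
  have "map2 (\<lambda>y a. y * q_exp G p j k a) ys as = map (\<lambda>x. x * p ^ j) xs"
    using xs(2) dvd by (intro nth_equalityI) (auto simp: ys_def q_exp_def power_add)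
  then have "x = pow_prod G (alpha_jk G p j k as) ys"
    using x xs pow_prod_pow[OF as] pow_prod_map_pow[OF as] by (simp add: alpha_jk_def)
  then show "x \<in> generate G (set (alpha_jk G p j k as))"
    using as pow_prod_in_generate[of "alpha_jk G p j k as"] by (auto simp: alpha_jk_def)
qed

end

theorem lemma1:
  fixes G :: "('a, 'b) monoid_scheme" and p j k :: nat and \<alpha> :: "'a list"
  assumes "Factorial_Ring.prime p"
    and "comm_group G" and "finite (carrier G)"
    and "\<exists>m. order G = p ^ m"
    and "is_basis G \<alpha>" and "generate G (set \<alpha>) = carrier G"
    and "j < k"
  shows "is_basis G (alpha_jk G p j k \<alpha>) \<and> generate G (set (alpha_jk G p j k \<alpha>)) = Gjk G p j k"
proof -
  interpret comm_group G by fact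
  obtain m where order: "order G = p ^ m"
    using assms(4) by blast
  have "\<forall>a \<in> set (alpha_jk G p j k \<alpha>). a \<in> Gjk G p j k"
    using is_basis_carrier[OF assms(5)] pow_q_exp_in_Gjk ord_eq_power_logp_ord[OF assms(1) order]
    by (auto simp: alpha_jk_def)
  then have "generate G (set (alpha_jk G p j k \<alpha>)) \<subseteq> Gjk G p j k"
    by (intro generate_subgroup_incl[OF _ subgroup_Gjk]) blast
  moreover have "Gjk G p j k \<subseteq> generate G (set (alpha_jk G p j k \<alpha>))"
    using Gjk_subset_generate_alpha_jk[OF assms(1,3) order assms(5,6)] .
  moreover have "is_basis G (alpha_jk G p j k \<alpha>)"
    using is_basis_alpha_jk[OF assms(1,3) order assms(5)] .
  ultimately show ?thesis
    by blast
qed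

end
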